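(* Let $\mathbb{M}\subset\mathbb{T}^d$ be Lebesgue measurable. The set of vectors $\mathbf{a}\in\mathbb{R}^d$ generating an irrelevant direction (together with $\mathbf{0}$) is a linear subspace of $\mathbb{R}^d$. Moreover, if $0<|\mathbb{M}|<|\mathbb{T}^d|$, then at least one standard unit vector $\mathbf{e}_i$ ($1\le i\le d$) generates a relevant direction.
   Context: $\mathbb{T}^d=(\mathbb{R}/2\pi\mathbb{Z})^d$ with Lebesgue measure $|\cdot|$, $|\mathbb{T}^d|=(2\pi)^d$. For $\mathbf{a}\in\mathbb{R}^d$, $\mathbb{M}+\mathbf{a}$ is the translate of $\mathbb{M}$ (mod $2\pi$ in each coordinate), and $\Lambda_{\mathbb{M}}(\mathbf{a})=|\mathbb{M}\setminus(\mathbb{M}+\mathbf{a})|$. A vector $\mathbf{a}\in\mathbb{R}^d$ generates an irrelevant direction (with respect to $\mathbb{M}$) if $\Lambda_{\mathbb{M}}(\kappa\mathbf{a})=0$ for all $\kappa\in\mathbb{R}$; otherwise it generates a relevant direction. $\mathbf{e}_i$ denotes the $i$-th standard unit vector of $\mathbb{R}^d$. *)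

theory Defs
  imports "HOL-Analysis.Analysis"
begin

text \<open>The torus T^d = (R/2 pi Z)^d is represented by the fundamental domain
  [0, 2 pi)^d in R^d, with Lebesgue measure.\<close>

definition torus :: "(real ^ 'n) set" where
  "torus = {x. \<forall>i. 0 \<le> x $ i \<and> x $ i < 2 * pi}"

definition tmod :: "real ^ 'n \<Rightarrow> real ^ 'n" where
  "tmod x = (\<chi> i. x $ i - 2 * pi * of_int \<lfloor>x $ i / (2 * pi)\<rfloor>)"

definition ttranslate :: "(real ^ 'n) set \<Rightarrow> real ^ 'n \<Rightarrow> (real ^ 'n) set" where
  "ttranslate M a = (\<lambda>x. tmod (x + a)) ` M"

definition Lambda :: "(real ^ 'n) set \<Rightarrow> real ^ 'n \<Rightarrow> real" where
  "Lambda M a = measure lebesgue (M - ttranslate M a)"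

definition irrelevant_dir :: "(real ^ 'n) set \<Rightarrow> real ^ 'n \<Rightarrow> bool" where
  "irrelevant_dir M a \<longleftrightarrow> (\<forall>\<kappa>::real. Lambda M (\<kappa> *\<^sub>R a) = 0)"

end

theory Submission imports Defs begin

(*
  Lift M to its periodization P = {x. tmod x \<in> M} \<subseteq> R^n, the union of
  all lattice translates of M by (2 pi Z)^n.  Because M \<subseteq> torus, the defect
  M - (M + a) on the torus is the fundamental-domain piece of the
  lattice-periodic set P - (a + P), so  Lambda M a = 0  iff  a is an
  "almost-everywhere period" of P, i.e. P - (a + P) is negligible.  Almost-everywhere periods
  contain 0 and are closed under addition; hence the vectors all of whose real
  multiples are such periods form a linear subspace, which is exactly the set
  of irrelevant directions.  If all unit vectors were irrelevant, this subspace
  would be all of R^n, so every vector would be an a.e. period of P.  A Fubini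
  argument shows that a measurable set a.e. invariant under all translations is
  null or co-null; correspondingly |M| = 0 or |M| = (2 pi)^n.
*)

section \<open>Reduction modulo 2 pi\<close>

definition mod_2pi :: "real \<Rightarrow> real" where
  "mod_2pi r = r - 2 * pi * of_int \<lfloor>r / (2 * pi)\<rfloor>"

lemma tmod_nth: "tmod x $ i = mod_2pi (x $ i)"
  unfolding tmod_def mod_2pi_def by simp

lemma mod_2pi_add_period: "mod_2pi (r + 2 * pi * of_int j) = mod_2pi r"
proof -
  have "(r + 2 * pi * of_int j) / (2 * pi) = r / (2 * pi) + of_int j"
    by (simp add: field_simps)
  then show ?thesis unfolding mod_2pi_def by (simp add: algebra_simps)
qed

lemma mod_2pi_id:
  assumes "0 \<le> r" "r < 2 * pi"
  shows "mod_2pi r = r"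
proof -
  have "\<lfloor>r / (2 * pi)\<rfloor> = 0" using assms by (simp add: floor_eq_iff)
  then show ?thesis unfolding mod_2pi_def by simp
qed

text \<open>The lattice (2 pi Z)^n of periods of reduction modulo 2 pi; it is countable, which is
  what makes periodized null sets null.\<close>
definition lattice_2pi :: "(real ^ 'n) set" where
  "lattice_2pi = {k. \<forall>i. \<exists>z::int. k $ i = 2 * pi * of_int z}"

lemma countable_lattice_2pi: "countable (lattice_2pi :: (real ^ 'n) set)"
proof -
  have "lattice_2pi \<subseteq> range (\<lambda>f::'n \<Rightarrow> int. \<chi> i. 2 * pi * of_int (f i))"
  proof
    fix k :: "real ^ 'n" assume "k \<in> lattice_2pi"
    then have "\<forall>i. \<exists>z. k $ i = 2 * pi * of_int z" unfolding lattice_2pi_def by simp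
    from choice[OF this] obtain f where "\<forall>i. k $ i = 2 * pi * of_int (f i)" by blast
    then have "k = (\<chi> i. 2 * pi * of_int (f i))" by (simp add: vec_eq_iff)
    then show "k \<in> range (\<lambda>f::'n \<Rightarrow> int. \<chi> i. 2 * pi * of_int (f i))" by blast
  qed
  then show ?thesis by (rule countable_subset) simp
qed

lemma tmod_add_lattice:
  assumes "k \<in> lattice_2pi"
  shows "tmod (x + k) = tmod x"
proof -
  have "mod_2pi (x $ i + k $ i) = mod_2pi (x $ i)" for i
  proof -
    obtain z :: int where "k $ i = 2 * pi * of_int z" using assms unfolding lattice_2pi_def by blast
    then show ?thesis by (simp add: mod_2pi_add_period)
  qed
  then show ?thesis by (simp add: vec_eq_iff tmod_nth)
qed

lemma tmod_decompose: "\<exists>k\<in>lattice_2pi. x = tmod x + k"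
proof
  show "(\<chi> i. 2 * pi * of_int \<lfloor>x $ i / (2 * pi)\<rfloor>) \<in> lattice_2pi"
    unfolding lattice_2pi_def by auto
  show "x = tmod x + (\<chi> i. 2 * pi * of_int \<lfloor>x $ i / (2 * pi)\<rfloor>)"
    by (simp add: vec_eq_iff tmod_def)
qed

lemma tmod_id: "x \<in> torus \<Longrightarrow> tmod x = x"
  unfolding torus_def by (simp add: vec_eq_iff tmod_nth mod_2pi_id)

lemma tmod_tmod_add: "tmod (tmod x + c) = tmod (x + c)"
proof -
  obtain k where k: "k \<in> lattice_2pi" "x = tmod x + k" using tmod_decompose by blast
  then have "tmod (x + c) = tmod ((tmod x + c) + k)" by (metis add.commute add.left_commute)
  then show ?thesis using tmod_add_lattice[OF k(1)] by simp
qed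

section \<open>The periodization of a subset of the torus\<close>

definition periodization :: "(real ^ 'n) set \<Rightarrow> (real ^ 'n) set" where
  "periodization M = {x. tmod x \<in> M}"

lemma translate_mem_iff: "y \<in> (+) c ` S \<longleftrightarrow> y - (c :: 'a::ab_group_add) \<in> S"
  by (auto intro: rev_image_eqI[of "y - c"])

lemma periodization_add_lattice:
  "k \<in> lattice_2pi \<Longrightarrow> x + k \<in> periodization M \<longleftrightarrow> x \<in> periodization M"
  unfolding periodization_def by (simp add: tmod_add_lattice)

lemma subset_periodization: "M \<subseteq> torus \<Longrightarrow> M \<subseteq> periodization M"
  unfolding periodization_def using tmod_id by fastforce

text \<open>The periodization is the union of the lattice translates of M; since the
  lattice is countable, it is Lebesgue measurable whenever M is.\<close>
lemma periodization_eq_Union: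
  assumes "M \<subseteq> torus"
  shows "periodization M = (\<Union>k\<in>lattice_2pi. (+) k ` M)"
proof (intro set_eqI iffI)
  fix x assume "x \<in> periodization M"
  then have "tmod x \<in> M" unfolding periodization_def by simp
  moreover obtain k where "k \<in> lattice_2pi" "x - k = tmod x"
    using tmod_decompose by (metis add_diff_cancel_right')
  ultimately have "x \<in> (+) k ` M" by (simp add: translate_mem_iff)
  then show "x \<in> (\<Union>k\<in>lattice_2pi. (+) k ` M)" using \<open>k \<in> lattice_2pi\<close> by blast
next
  fix x assume "x \<in> (\<Union>k\<in>lattice_2pi. (+) k ` M)"
  then obtain k m where "k \<in> lattice_2pi" "m \<in> M" "x = m + k" by (auto simp: add.commute)
  then show "x \<in> periodization M"
    using periodization_add_lattice subset_periodization[OF assms] by blast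
qed

lemma periodization_measurable:
  assumes "M \<subseteq> torus" "M \<in> sets lebesgue"
  shows "periodization M \<in> sets lebesgue"
  unfolding periodization_eq_Union[OF assms(1)]
  by (intro sets.countable_UN'' countable_lattice_2pi lebesgue_sets_translation assms(2))

lemma ttranslate_mem_iff:
  assumes "M \<subseteq> torus" "y \<in> torus"
  shows "y \<in> ttranslate M c \<longleftrightarrow> y - c \<in> periodization M"
proof
  assume "y \<in> ttranslate M c"
  then obtain x where x: "x \<in> M" "y = tmod (x + c)" unfolding ttranslate_def by auto
  then have "tmod (y - c) = x" using tmod_tmod_add[of "x + c" "-c"] tmod_id assms(1) by auto
  then show "y - c \<in> periodization M" unfolding periodization_def using x(1) by simp
next
  assume "y - c \<in> periodization M"
  moreover have "y = tmod (tmod (y - c) + c)"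
    using tmod_tmod_add[of "y - c" c] tmod_id[OF assms(2)] by simp
  ultimately show "y \<in> ttranslate M c"
    unfolding periodization_def ttranslate_def by blast
qed

lemma torus_subset_cbox: "torus \<subseteq> cbox (0::real^'n) (\<chi> i. 2 * pi)"
  unfolding torus_def by (auto simp: mem_box_cart less_imp_le)

lemma Lambda_eq:
  assumes "M \<subseteq> torus"
  shows "Lambda M c = measure lebesgue (M - (+) c ` periodization M)"
proof -
  have "M - ttranslate M c = M - (+) c ` periodization M"
    using assms ttranslate_mem_iff[OF assms] by (auto simp: translate_mem_iff)
  then show ?thesis unfolding Lambda_def by simp
qed

section \<open>Almost-everywhere periods\<close>

definition ae_period :: "'a::euclidean_space set \<Rightarrow> 'a \<Rightarrow> bool" where
  "ae_period P c \<longleftrightarrow> negligible (P - (+) c ` P)"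

text \<open>The a.e. periods of any set contain 0 and are closed under addition:
  P - (u + v + P) lies in (P - (u + P)) \<union> (u + (P - (v + P))).\<close>
lemma ae_period_0: "ae_period P 0"
  unfolding ae_period_def by simp

lemma ae_period_add:
  assumes "ae_period P u" "ae_period P v"
  shows "ae_period P (u + v)"
proof -
  have "P - (+) (u + v) ` P \<subseteq> (P - (+) u ` P) \<union> (+) u ` (P - (+) v ` P)"
    by (auto simp: translate_mem_iff algebra_simps)
  moreover have "negligible ((P - (+) u ` P) \<union> (+) u ` (P - (+) v ` P))"
    using assms unfolding ae_period_def by (intro negligible_Un negligible_translation)
  ultimately show ?thesis unfolding ae_period_def using negligible_subset by blast
qed

text \<open>Since the periodization is lattice-periodic, its defect under c is the union
  of the lattice translates of the defect of M; so the two are null together.\<close>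
lemma negligible_defect_iff_ae_period:
  assumes "M \<subseteq> torus"
  shows "negligible (M - (+) c ` periodization M) \<longleftrightarrow> ae_period (periodization M) c"
proof
  let ?P = "periodization M"
  assume null: "negligible (M - (+) c ` ?P)"
  have "?P - (+) c ` ?P \<subseteq> (\<Union>k\<in>lattice_2pi. (+) k ` (M - (+) c ` ?P))"
  proof
    fix x assume x: "x \<in> ?P - (+) c ` ?P"
    then obtain k m where km: "k \<in> lattice_2pi" "m \<in> M" "x = k + m"
      using periodization_eq_Union[OF assms] by blast
    have "(m - c) + k = x - c" using km(3) by (simp add: algebra_simps)
    moreover have "x - c \<notin> ?P" using x by (simp add: translate_mem_iff)
    ultimately have "m - c \<notin> ?P" using periodization_add_lattice[OF km(1)] by metis
    then have "m \<in> M - (+) c ` ?P" using km(2) by (simp add: translate_mem_iff)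
    then show "x \<in> (\<Union>k\<in>lattice_2pi. (+) k ` (M - (+) c ` ?P))"
      using km(1,3) by blast
  qed
  moreover have "negligible (\<Union>k\<in>lattice_2pi. (+) k ` (M - (+) c ` ?P))"
    by (intro negligible_countable_Union countable_image countable_lattice_2pi)
      (auto intro: negligible_translation null)
  ultimately show "ae_period ?P c" unfolding ae_period_def using negligible_subset by blast
next
  assume "ae_period (periodization M) c"
  then show "negligible (M - (+) c ` periodization M)"
    unfolding ae_period_def using subset_periodization[OF assms] negligible_subset
    by (metis Diff_mono order_refl)
qed

text \<open>The defect is bounded and measurable, so it has measure zero iff it is
  negligible; this characterizes Lambda M c = 0 and hence irrelevant directions.\<close>
lemma Lambda_eq_0_iff:
  assumes "M \<subseteq> torus" "M \<in> sets lebesgue"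
  shows "Lambda M c = 0 \<longleftrightarrow> ae_period (periodization M) c"
proof -
  have "M - (+) c ` periodization M \<in> sets lebesgue"
    using assms periodization_measurable lebesgue_sets_translation by blast
  moreover have "bounded (M - (+) c ` periodization M)"
    using assms(1) torus_subset_cbox bounded_cbox bounded_subset by blast
  ultimately have "M - (+) c ` periodization M \<in> lmeasurable"
    by (rule bounded_set_imp_lmeasurable[rotated])
  then show ?thesis
    unfolding Lambda_eq[OF assms(1)] negligible_defect_iff_ae_period[OF assms(1), symmetric]
    using negligible_iff_measure0 by metis
qed

lemma irrelevant_dir_iff:
  assumes "M \<subseteq> torus" "M \<in> sets lebesgue"
  shows "irrelevant_dir M a \<longleftrightarrow> (\<forall>\<kappa>. ae_period (periodization M) (\<kappa> *\<^sub>R a))"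
  unfolding irrelevant_dir_def Lambda_eq_0_iff[OF assms] ..

lemma subspace_of_additive_closed:
  fixes G :: "'a::real_vector \<Rightarrow> bool"
  assumes "G 0" and "\<And>u v. G u \<Longrightarrow> G v \<Longrightarrow> G (u + v)"
  shows "subspace {a. \<forall>\<kappa>::real. G (\<kappa> *\<^sub>R a)}"
  unfolding subspace_def using assms by (auto simp: scaleR_right_distrib)

section \<open>Sets invariant under all translations are null or co-null\<close>

text \<open>Borel version, by Fubini: integrating the indicator of
  {(x, c). x \<in> B, x + c \<notin> B} in both orders gives 0 = |B| * |-B|.\<close>
lemma borel_translation_invariant_null_or_conull:
  fixes B :: "'a::euclidean_space set"
  assumes B[measurable]: "B \<in> sets borel"
    and inv: "\<And>c. emeasure lborel {x \<in> B. x + c \<notin> B} = 0"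
  shows "emeasure lborel B = 0 \<or> emeasure lborel (- B) = 0"
proof -
  let ?f = "\<lambda>x c. indicator B x * indicator (- B) (x + c) :: ennreal"
  have inner_x: "(\<integral>\<^sup>+x. ?f x c \<partial>lborel) = 0" for c
  proof -
    have "(\<lambda>x. ?f x c) = indicator {x \<in> B. x + c \<notin> B}"
      by (auto simp: indicator_def fun_eq_iff)
    then show ?thesis using inv[of c] by simp
  qed
  have inner_c: "(\<integral>\<^sup>+c. ?f x c \<partial>lborel) = indicator B x * emeasure lborel (- B)" for x
  proof -
    have "(\<integral>\<^sup>+c. indicator (- B) (x + c) \<partial>lborel)
        = (\<integral>\<^sup>+y. indicator (- B) y \<partial>distr lborel borel ((+) x))"
      by (subst nn_integral_distr) auto
    also have "\<dots> = emeasure lborel (- B)" by (simp add: lborel_distr_plus)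
    finally have "(\<integral>\<^sup>+c. indicator (- B) (x + c) \<partial>lborel) = emeasure lborel (- B)" .
    then show ?thesis by (subst nn_integral_cmult) auto
  qed
  have "0 = (\<integral>\<^sup>+c. (\<integral>\<^sup>+x. ?f x c \<partial>lborel) \<partial>lborel)" by (simp add: inner_x)
  also have "\<dots> = (\<integral>\<^sup>+x. (\<integral>\<^sup>+c. ?f x c \<partial>lborel) \<partial>lborel)"
    by (rule lborel_pair.Fubini') measurable
  also have "\<dots> = emeasure lborel B * emeasure lborel (- B)"
    by (simp add: inner_c nn_integral_multc)
  finally show ?thesis by simp
qed

lemma negligible_borel_iff:
  fixes S :: "'a::euclidean_space set"
  assumes "S \<in> sets borel"
  shows "negligible S \<longleftrightarrow> emeasure lborel S = 0"
proof -
  have "S \<in> sets lborel" using assms by simp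
  then show ?thesis
    unfolding negligible_iff_null_sets null_sets_completion_iff[OF \<open>S \<in> sets lborel\<close>]
    by auto
qed

text \<open>Lebesgue version for a.e. periods, by passing to a Borel kernel of P.\<close>
lemma ae_invariant_null_or_conull:
  fixes P :: "'a::euclidean_space set"
  assumes P: "P \<in> sets lebesgue" and inv: "\<And>c. ae_period P c"
  shows "negligible P \<or> negligible (- P)"
proof -
  obtain B N N' where BN: "P = B \<union> N" "N \<subseteq> N'" "N' \<in> null_sets lborel" "B \<in> sets lborel"
    using sets_completionE[OF P] by metis
  have B: "B \<in> sets borel" using BN(4) by simp
  have null_N': "negligible N'"
    using BN(3) negligible_iff_null_sets null_sets_completionI by blast
  have "emeasure lborel {x \<in> B. x + c \<notin> B} = 0" for c
  proof -
    have "{x \<in> B. x + c \<notin> B} \<subseteq> (P - (+) (- c) ` P) \<union> (+) (- c) ` N'"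
      using BN(1,2) by (auto simp: translate_mem_iff)
    moreover have "negligible ((P - (+) (- c) ` P) \<union> (+) (- c) ` N')"
      using inv[of "- c"] null_N' unfolding ae_period_def
      by (intro negligible_Un negligible_translation)
    ultimately have "negligible {x \<in> B. x + c \<notin> B}" using negligible_subset by blast
    moreover have "{x \<in> B. x + c \<notin> B} \<in> sets borel"
    proof -
      have "{x \<in> B. x + c \<notin> B} = B \<inter> (\<lambda>x. x + c) -` (- B)" by blast
      then show ?thesis using B by simp
    qed
    ultimately show ?thesis by (simp add: negligible_borel_iff)
  qed
  then have "emeasure lborel B = 0 \<or> emeasure lborel (- B) = 0"
    by (rule borel_translation_invariant_null_or_conull[OF B])
  then have "negligible B \<or> negligible (- B)"
    using B by (simp add: negligible_borel_iff)
  then show ?thesis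
  proof
    assume "negligible B"
    then have "negligible (B \<union> N')" using null_N' by (rule negligible_Un)
    moreover have "P \<subseteq> B \<union> N'" using BN(1,2) by auto
    ultimately show ?thesis using negligible_subset by blast
  next
    assume "negligible (- B)"
    moreover have "- P \<subseteq> - B" using BN(1) by auto
    ultimately show ?thesis using negligible_subset by blast
  qed
qed

text \<open>The torus differs from the box [0, 2 pi]^n only by part of the box boundary.\<close>
lemma measure_torus: "measure lebesgue (torus :: (real ^ 'n) set) = (2 * pi) ^ CARD('n)"
proof -
  let ?b = "(\<chi> i. 2 * pi) :: real ^ 'n"
  have "box 0 ?b \<subseteq> torus" unfolding torus_def by (auto simp: mem_box_cart less_imp_le)
  then have "cbox 0 ?b - torus \<union> (torus - cbox 0 ?b) \<subseteq> cbox 0 ?b - box 0 ?b"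
    using torus_subset_cbox by blast
  then have null: "negligible (cbox 0 ?b - torus \<union> (torus - cbox 0 ?b))"
    by (rule negligible_subset[OF negligible_frontier_interval])
  have "measure lebesgue (torus :: (real ^ 'n) set) = measure lebesgue (cbox 0 ?b)"
    by (rule measure_negligible_symdiff[OF lmeasurable_cbox null])
  also have "\<dots> = (2 * pi) ^ CARD('n)"
  proof -
    have "0 \<in> cbox 0 ?b" by (simp add: mem_box_cart)
    then have "cbox 0 ?b \<noteq> {}" by blast
    then show ?thesis by (simp add: content_cbox_cart)
  qed
  finally show ?thesis .
qed

lemma irrelevant_dirs_eq:
  assumes "M \<subseteq> torus" "M \<in> sets lebesgue"
  shows "{a. irrelevant_dir M a} \<union> {0} = {a. \<forall>\<kappa>::real. ae_period (periodization M) (\<kappa> *\<^sub>R a)}"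
  using irrelevant_dir_iff[OF assms] ae_period_0 by auto

lemma subspace_irrelevant_dirs:
  assumes "M \<subseteq> torus" "M \<in> sets lebesgue"
  shows "subspace ({a. irrelevant_dir M a} \<union> {0})"
  unfolding irrelevant_dirs_eq[OF assms]
  by (rule subspace_of_additive_closed[OF ae_period_0 ae_period_add])

lemma measure_trivial_if_all_ae_periods:
  fixes M :: "(real ^ 'n) set"
  assumes M: "M \<subseteq> torus" "M \<in> sets lebesgue"
    and periods: "\<And>c. ae_period (periodization M) c"
  shows "measure lebesgue M = 0 \<or> measure lebesgue M = (2 * pi) ^ CARD('n)"
proof -
  have "negligible (periodization M) \<or> negligible (- periodization M)"
    using ae_invariant_null_or_conull[OF periodization_measurable[OF M] periods] .
  then show ?thesis
  proof
    assume "negligible (periodization M)"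
    then have "negligible M" using subset_periodization[OF M(1)] negligible_subset by blast
    then show ?thesis by (simp add: negligible_imp_measure0)
  next
    assume null: "negligible (- periodization M)"
    have "torus - M \<subseteq> - periodization M"
      by (auto simp: periodization_def tmod_id)
    then have "negligible (M - torus \<union> (torus - M))"
      using M(1) null negligible_subset by (metis Diff_eq_empty_iff sup_bot_left)
    moreover have "M \<in> lmeasurable"
      using M torus_subset_cbox bounded_cbox bounded_subset bounded_set_imp_lmeasurable by metis
    ultimately have "measure lebesgue (torus :: (real ^ 'n) set) = measure lebesgue M"
      by (rule measure_negligible_symdiff[rotated])
    then show ?thesis by (simp add: measure_torus)
  qed
qed

theorem mainTheorem4:
  fixes M :: "(real ^ 'n) set"
  assumes "M \<subseteq> torus" and "M \<in> sets lebesgue"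
  shows "subspace ({a. irrelevant_dir M a} \<union> {0})
     \<and> (0 < measure lebesgue M \<and> measure lebesgue M < (2 * pi) ^ CARD('n)
          \<longrightarrow> (\<exists>i. \<not> irrelevant_dir M (axis i 1)))"
proof (intro conjI impI)
  let ?S = "{a. irrelevant_dir M a} \<union> {0}"
  show sub: "subspace ?S" by (rule subspace_irrelevant_dirs[OF assms])
  assume nontrivial: "0 < measure lebesgue M \<and> measure lebesgue M < (2 * pi) ^ CARD('n)"
  show "\<exists>i. \<not> irrelevant_dir M (axis i 1)"
  proof (rule ccontr)
    assume "\<nexists>i. \<not> irrelevant_dir M (axis i 1)"
    then have "Basis \<subseteq> ?S" by (auto simp: Basis_vec_def)
    then have "span Basis \<subseteq> ?S" by (rule span_minimal[OF _ sub])
    then have "\<forall>\<kappa>::real. ae_period (periodization M) (\<kappa> *\<^sub>R c)" for c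
      unfolding irrelevant_dirs_eq[OF assms] span_Basis by blast
    then have "ae_period (periodization M) c" for c by (metis scaleR_one)
    then show False
      using measure_trivial_if_all_ae_periods[OF assms] nontrivial by auto
  qed
qed

end
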